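(* Let $A$ be a finite alphabet, $w_1,\ldots,w_k,w'_1,\ldots,w'_{k'}\in A^*$, and $N=\max(|w_1|,\ldots,|w_k|,|w'_1|,\ldots,|w'_{k'}|)\ge1$. Then $\mathrm{WMIX}(w_1,\ldots,w_k)=\mathrm{WMIX}(w'_1,\ldots,w'_{k'})$ if and only if both \[\mathrm{WMIX}(w_1,\ldots,w_k)\cap A^{<N}=\mathrm{WMIX}(w'_1,\ldots,w'_{k'})\cap A^{<N}\] and \[\mathrm{Mtr}_N(\mathrm{WMIX}(w_1,\ldots,w_k))=\mathrm{Mtr}_N(\mathrm{WMIX}(w'_1,\ldots,w'_{k'})).\]
   Context: For $u,w\in A^*$, $|w|_u$ is the number of pairs $(x,y)\in A^*\times A^*$ with $xuy=w$. $\mathrm{WMIX}(w_1,\ldots,w_k)=\{w\in A^*\mid|w|_{w_1}=\cdots=|w|_{w_k}\}$. $A^{<N}$ is the set of words of length less than $N$. $\mathrm{suff}_n(w)$ is the suffix of length $n$ of $w$. A (directed) graph is $\mathcal G=(V,E)$ with $E\subseteq V\times V$. A walk is a sequence $\omega=(v_1,\ldots,v_n)\in V^n$, $n\ge1$, with $(v_i,v_{i+1})\in E$ for all $1\le i<n$; its length is $|\omega|=n-1$, its source is $v_1$ and its target is $v_n$. $V(\omega)=\{v_1,\ldots,v_n\}$. If the target of $\omega_1=(v_1,\ldots,v_m)$ equals the source of $\omega_2=(v'_1,\ldots,v'_n)$, then $\omega_1\odot\omega_2=(v_1,\ldots,v_m,v'_2,\ldots,v'_n)$. A loop is a non-empty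 walk whose source equals its target. A path is a walk whose vertices are pairwise distinct (empty walks are paths). A cycle is a loop $(v,v_1,\ldots,v_n,v)$ such that $(v,v_1,\ldots,v_n)$ is a path. $\mathcal W(\mathcal G),\mathcal P(\mathcal G),\mathcal C(\mathcal G)$ denote the sets of walks, paths and cycles. For a sequence of cycles $\Gamma=(\gamma_1,\ldots,\gamma_n)$: $|\Gamma|_\gamma=\#\{i\mid\gamma_i=\gamma\}$, $\Gamma.\gamma=(\gamma_1,\ldots,\gamma_n,\gamma)$; $\emptyset$ is the empty sequence. Decomposition $\mathrm{dec}_{\mathcal G}:\mathcal W(\mathcal G)\to\mathcal P(\mathcal G)\times\mathcal C(\mathcal G)^*$, by induction on length: $\mathrm{dec}_{\mathcal G}((v))=((v),\emptyset)$; for a walk $\omega$ with target $v$ and an edge $(v,v')$, let $(\pi,\Gamma)=\mathrm{dec}_{\mathcal G}(\omega)$ (the target of $\pi$ is $v$); if $v'\notin V(\pi)$ then $\mathrm{dec}_{\mathcal G}(\omega\odot(v,v'))=(\pi\odot(v,v'),\Gamma)$; otherwise, writing $\pi=(v_1,\ldots,v_{j-1},v',v_{j+1},\ldots,v)$, $\mathrm{dec}_{\mathcal G}(\omega\odot(v,v'))=((v_1,\ldots,v_{j-1},v'),\ \Gamma.(v',v_{j+1},\ldots,v,v'))$. Multi-trace: for $\omega\in\mathcal W(\mathcal G)$ with $(\pi_\omega,\Gamma)=\mathrm{dec}_{\mathcal G}(\omega)$, $\mathrm{mtr}(\omega):\mathcal P(\mathcal G)\cup\mathcal C(\mathcal G)\to\mathbb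 N$ is given by $\mathrm{mtr}(\omega)(\pi)=1$ if $\pi=\pi_\omega$ and $0$ for other paths $\pi$, and $\mathrm{mtr}(\omega)(\gamma)=|\Gamma|_\gamma$ for cycles $\gamma$. The $N$-dimensional de Bruijn graph $\mathcal D_N=(A^N,E)$ has vertex set $A^N$ and edge set $E=\{(av,vb)\mid a,b\in A,\ v\in A^{N-1}\}$. For a vertex $v\in A^N$ and a word $w=a_1\cdots a_m$, $\mathrm{walk}(v,w)=(v,v_1,\ldots,v_m)$ with $v_i=\mathrm{suff}_N(v\,a_1\cdots a_i)$ (for $w$ empty, $\mathrm{walk}(v,w)=(v)$). Multi-trace of a language $L\subseteq A^*$ of order $N$: $\mathrm{Mtr}_N(L)=\{\mathrm{mtr}(\mathrm{walk}(v,u))\mid v\in A^N,\ u\in A^*,\ vu\in L\}$, multi-traces taken in $\mathcal D_N$. *)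

theory Defs
  imports Main
begin

definition occ :: "'a list \<Rightarrow> 'a list \<Rightarrow> nat" where
  "occ w u = card {(x, y). x @ u @ y = w}"

definition WMIX :: "'a list list \<Rightarrow> 'a list set" where
  "WMIX ws = {w. \<forall>u \<in> set ws. \<forall>v \<in> set ws. occ w u = occ w v}"

definition suff :: "nat \<Rightarrow> 'a list \<Rightarrow> 'a list" where
  "suff n w = drop (length w - n) w"

definition deBruijn_edges :: "nat \<Rightarrow> ('a list \<times> 'a list) set" where
  "deBruijn_edges N = {(a # v, v @ [b]) | a b v. length v = N - 1}"

definition is_walk :: "('v \<times> 'v) set \<Rightarrow> 'v list \<Rightarrow> bool" where
  "is_walk E \<omega> \<longleftrightarrow> \<omega> \<noteq> [] \<and> (\<forall>i. Suc i < length \<omega> \<longrightarrow> (\<omega> ! i, \<omega> ! Suc i) \<in> E)"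

definition dec_step :: "'v list \<times> 'v list list \<Rightarrow> 'v \<Rightarrow> 'v list \<times> 'v list list" where
  "dec_step pg v' = (let (\<pi>, \<Gamma>) = pg in
     if v' \<notin> set \<pi> then (\<pi> @ [v'], \<Gamma>)
     else (takeWhile (\<lambda>x. x \<noteq> v') \<pi> @ [v'], \<Gamma> @ [dropWhile (\<lambda>x. x \<noteq> v') \<pi> @ [v']]))"

(* dec(\<omega>) = (path, sequence of cycles), by induction on the length of the walk *)
fun dec :: "'v list \<Rightarrow> 'v list \<times> 'v list list" where
  "dec [] = ([], [])"
| "dec (v # rest) = fold (\<lambda>v' pg. dec_step pg v') rest ([v], [])"

definition mtr :: "'v list \<Rightarrow> 'v list \<Rightarrow> nat" where
  "mtr \<omega> x = (if x = fst (dec \<omega>) then 1 else 0) + count_list (snd (dec \<omega>)) x"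

definition dbwalk :: "nat \<Rightarrow> 'a list \<Rightarrow> 'a list \<Rightarrow> 'a list list" where
  "dbwalk N v w = v # map (\<lambda>i. suff N (v @ take i w)) [1..<Suc (length w)]"

definition Mtr :: "nat \<Rightarrow> 'a list set \<Rightarrow> ('a list list \<Rightarrow> nat) set" where
  "Mtr N L = {mtr (dbwalk N v u) | v u. length v = N \<and> v @ u \<in> L}"

end

theory Submission
  imports Defs "HOL-Library.Multiset"
begin

text \<open>Let w = v u with |v| = N, and let x be a word with |x| \<le> N. Every occurrence of x
in w either starts at the first letter of one of the vertices visited by walk(v, u), and x is then
a prefix of that vertex, or it lies strictly inside the last vertex. So |w|_x depends only on the
multiset of visited vertices and on the target of the walk. Both are recovered from the
multi-trace: the path of the decomposition is the only distinct sequence in its support, the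
cycles are not distinct, and the visited vertices are those of the path together with those of
the cycles without their repeated first vertex.\<close>

definition cycle_vertices :: "'v list list \<Rightarrow> 'v multiset" where
  "cycle_vertices \<Gamma> = (\<Sum>\<gamma>\<leftarrow>\<Gamma>. mset (tl \<gamma>))"

lemma cycle_vertices_mset:
  "cycle_vertices \<Gamma> = sum_mset (image_mset (\<lambda>\<gamma>. mset (tl \<gamma>)) (mset \<Gamma>))"
  unfolding cycle_vertices_def by (metis mset_map sum_mset_sum_list)

lemma dec_step_invariant:
  assumes "distinct \<pi>" "\<forall>\<gamma>\<in>set \<Gamma>. \<not> distinct \<gamma>" "dec_step (\<pi>, \<Gamma>) a = (\<pi>', \<Gamma>')"
  shows "distinct \<pi>' \<and> last \<pi>' = a \<and> (\<forall>\<gamma>\<in>set \<Gamma>'. \<not> distinct \<gamma>)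
         \<and> mset \<pi>' + cycle_vertices \<Gamma>' = mset \<pi> + cycle_vertices \<Gamma> + {#a#}"
proof (cases "a \<in> set \<pi>")
  case False
  then show ?thesis using assms by (auto simp: dec_step_def cycle_vertices_def)
next
  case True
  define t where "t = takeWhile (\<lambda>x. x \<noteq> a) \<pi>"
  define d where "d = dropWhile (\<lambda>x. x \<noteq> a) \<pi>"
  have \<pi>: "\<pi> = t @ d" unfolding t_def d_def by simp
  have "d \<noteq> []" using True unfolding d_def by (simp add: dropWhile_eq_Nil_conv)
  moreover have "hd d = a" using hd_dropWhile[of "\<lambda>x. x \<noteq> a" \<pi>] \<open>d \<noteq> []\<close> unfolding d_def by simp
  ultimately have d: "d = a # tl d" by (cases d) auto
  have \<pi>': "\<pi>' = t @ [a]" and \<Gamma>': "\<Gamma>' = \<Gamma> @ [d @ [a]]"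
    using assms(3) True by (auto simp: dec_step_def t_def d_def)
  have "a \<notin> set t" unfolding t_def using set_takeWhileD by fastforce
  moreover have "distinct t" using assms(1) \<pi> by simp
  moreover have "\<not> distinct (d @ [a])" by (subst d) simp
  moreover have "mset \<pi>' + cycle_vertices \<Gamma>' = mset \<pi> + cycle_vertices \<Gamma> + {#a#}"
  proof -
    have "mset d = add_mset a (mset (tl d))" "tl (d @ [a]) = tl d @ [a]"
      by (subst d, simp)+
    then show ?thesis unfolding \<pi>' \<Gamma>' cycle_vertices_def using \<pi> by simp
  qed
  ultimately show ?thesis using assms(2) unfolding \<pi>' \<Gamma>' by simp
qed

lemma fold_dec_step_invariant:
  assumes "distinct \<pi>" "\<forall>\<gamma>\<in>set \<Gamma>. \<not> distinct \<gamma>"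
    and "fold (\<lambda>v' pg. dec_step pg v') vs (\<pi>, \<Gamma>) = (\<pi>', \<Gamma>')"
  shows "distinct \<pi>' \<and> last \<pi>' = last (last \<pi> # vs) \<and> (\<forall>\<gamma>\<in>set \<Gamma>'. \<not> distinct \<gamma>)
         \<and> mset \<pi>' + cycle_vertices \<Gamma>' = mset \<pi> + cycle_vertices \<Gamma> + mset vs"
  using assms
proof (induction vs arbitrary: \<pi> \<Gamma>)
  case Nil
  then show ?case by simp
next
  case (Cons a vs)
  obtain \<rho> \<Delta> where step: "dec_step (\<pi>, \<Gamma>) a = (\<rho>, \<Delta>)" by (cases "dec_step (\<pi>, \<Gamma>) a")
  note inv = dec_step_invariant[OF Cons.prems(1,2) step]
  have "fold (\<lambda>v' pg. dec_step pg v') vs (\<rho>, \<Delta>) = (\<pi>', \<Gamma>')" using Cons.prems(3) step by simp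
  with inv have "distinct \<pi>' \<and> last \<pi>' = last (last \<rho> # vs) \<and> (\<forall>\<gamma>\<in>set \<Gamma>'. \<not> distinct \<gamma>)
      \<and> mset \<pi>' + cycle_vertices \<Gamma>' = mset \<rho> + cycle_vertices \<Delta> + mset vs"
    using Cons.IH by blast
  with inv show ?case by (simp add: add.assoc)
qed

lemma dec_invariant:
  assumes "\<omega> \<noteq> []" "dec \<omega> = (\<pi>, \<Gamma>)"
  shows "distinct \<pi>" "last \<pi> = last \<omega>" "\<forall>\<gamma>\<in>set \<Gamma>. \<not> distinct \<gamma>"
    and "mset \<pi> + cycle_vertices \<Gamma> = mset \<omega>"
proof -
  obtain v vs where \<omega>: "\<omega> = v # vs" using assms(1) by (cases \<omega>) auto
  have "fold (\<lambda>v' pg. dec_step pg v') vs ([v], []) = (\<pi>, \<Gamma>)" using assms(2) \<omega> by simp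
  from fold_dec_step_invariant[OF _ _ this] \<omega>
  show "distinct \<pi>" "last \<pi> = last \<omega>" "\<forall>\<gamma>\<in>set \<Gamma>. \<not> distinct \<gamma>"
    "mset \<pi> + cycle_vertices \<Gamma> = mset \<omega>"
    by (auto simp: cycle_vertices_def)
qed

lemma mtr_eq_imp_mset_eq_last_eq:
  assumes "\<omega>\<^sub>1 \<noteq> []" "\<omega>\<^sub>2 \<noteq> []" "mtr \<omega>\<^sub>1 = mtr \<omega>\<^sub>2"
  shows "mset \<omega>\<^sub>1 = mset \<omega>\<^sub>2" "last \<omega>\<^sub>1 = last \<omega>\<^sub>2"
proof -
  obtain \<pi>\<^sub>1 \<Gamma>\<^sub>1 where d1: "dec \<omega>\<^sub>1 = (\<pi>\<^sub>1, \<Gamma>\<^sub>1)" by (cases "dec \<omega>\<^sub>1")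
  obtain \<pi>\<^sub>2 \<Gamma>\<^sub>2 where d2: "dec \<omega>\<^sub>2 = (\<pi>\<^sub>2, \<Gamma>\<^sub>2)" by (cases "dec \<omega>\<^sub>2")
  note inv1 = dec_invariant[OF assms(1) d1] and inv2 = dec_invariant[OF assms(2) d2]
  have mtr1: "mtr \<omega>\<^sub>1 x = (if x = \<pi>\<^sub>1 then 1 else 0) + count_list \<Gamma>\<^sub>1 x" for x
    unfolding mtr_def d1 by simp
  have mtr2: "mtr \<omega>\<^sub>2 x = (if x = \<pi>\<^sub>2 then 1 else 0) + count_list \<Gamma>\<^sub>2 x" for x
    unfolding mtr_def d2 by simp
  have "\<pi>\<^sub>1 \<notin> set \<Gamma>\<^sub>1" "\<pi>\<^sub>1 \<notin> set \<Gamma>\<^sub>2" using inv1(1,3) inv2(3) by blast+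
  then have "count_list \<Gamma>\<^sub>1 \<pi>\<^sub>1 = 0" "count_list \<Gamma>\<^sub>2 \<pi>\<^sub>1 = 0" by (simp_all add: count_notin)
  then have "mtr \<omega>\<^sub>2 \<pi>\<^sub>1 = 1" "mtr \<omega>\<^sub>2 \<pi>\<^sub>1 = (if \<pi>\<^sub>1 = \<pi>\<^sub>2 then 1 else 0)"
    using mtr1[of \<pi>\<^sub>1] mtr2[of \<pi>\<^sub>1] assms(3) by simp_all
  then have "\<pi>\<^sub>1 = \<pi>\<^sub>2" by presburger
  moreover have "count_list \<Gamma>\<^sub>1 x = count_list \<Gamma>\<^sub>2 x" for x
    using mtr1[of x] mtr2[of x] assms(3) \<open>\<pi>\<^sub>1 = \<pi>\<^sub>2\<close> by simp
  then have "mset \<Gamma>\<^sub>1 = mset \<Gamma>\<^sub>2" by (simp add: multiset_eq_iff count_mset)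
  then have "cycle_vertices \<Gamma>\<^sub>1 = cycle_vertices \<Gamma>\<^sub>2" by (simp add: cycle_vertices_mset)
  ultimately show "mset \<omega>\<^sub>1 = mset \<omega>\<^sub>2" "last \<omega>\<^sub>1 = last \<omega>\<^sub>2"
    using inv1(2,4) inv2(2,4) by simp_all
qed

lemma occ_eq_card_positions:
  "occ w x = card {i. i + length x \<le> length w \<and> take (length x) (drop i w) = x}"
proof -
  let ?F = "{(p, s). p @ x @ s = w}"
  let ?I = "{i. i + length x \<le> length w \<and> take (length x) (drop i w) = x}"
  have "bij_betw (\<lambda>(p, s). length p) ?F ?I"
  proof (rule bij_betwI')
    fix a b assume "a \<in> ?F" "b \<in> ?F"
    then show "((\<lambda>(p, s). length p) a = (\<lambda>(p, s). length p) b) = (a = b)"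
      by (cases a, cases b) (auto simp: append_eq_append_conv)
  next
    fix a assume "a \<in> ?F"
    then show "(\<lambda>(p, s). length p) a \<in> ?I" by (cases a) auto
  next
    fix i assume i: "i \<in> ?I"
    have "drop i w = x @ drop (i + length x) w"
      using i append_take_drop_id[of "length x" "drop i w"] by (simp add: add.commute)
    then have "take i w @ x @ drop (i + length x) w = w"
      by (metis append_take_drop_id)
    with i show "\<exists>a\<in>?F. i = (\<lambda>(p, s). length p) a"
      by (intro bexI[of _ "(take i w, drop (i + length x) w)"]) auto
  qed
  then show ?thesis unfolding occ_def by (rule bij_betw_same_card)
qed

lemma dbwalk_eq_windows:
  assumes "length v = N"
  shows "dbwalk N v u = map (\<lambda>i. take N (drop i (v @ u))) [0..<Suc (length u)]"
proof (rule nth_equalityI)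
  fix i assume "i < length (dbwalk N v u)"
  then have i: "i \<le> length u" by (simp add: dbwalk_def del: upt_Suc)
  show "dbwalk N v u ! i = map (\<lambda>i. take N (drop i (v @ u))) [0..<Suc (length u)] ! i"
  proof (cases i)
    case 0
    then show ?thesis using assms by (cases u) (simp_all add: dbwalk_def del: upt_Suc)
  next
    case (Suc k)
    have "dbwalk N v u ! i = drop i (v @ take i u)"
      using assms i Suc by (simp add: dbwalk_def nth_Cons' suff_def del: upt_Suc)
    also have "\<dots> = drop i (take (N + i) (v @ u))" using assms by simp
    also have "\<dots> = take N (drop i (v @ u))" by (simp only: take_drop)
    finally show ?thesis using i by (simp del: upt_Suc)
  qed
qed (simp add: dbwalk_def del: upt_Suc)

lemma last_dbwalk:
  assumes "length v = N"
  shows "last (dbwalk N v u) = drop (length u) (v @ u)"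
  using assms by (simp add: dbwalk_eq_windows)

definition walk_occ :: "nat \<Rightarrow> 'a list multiset \<Rightarrow> 'a list \<Rightarrow> 'a list \<Rightarrow> nat" where
  "walk_occ N M z x = size (filter_mset (\<lambda>y. take (length x) y = x) M)
     + card {j. 0 < j \<and> j + length x \<le> N \<and> take (length x) (drop j z) = x}"

lemma card_prefix_positions_eq_count_windows:
  assumes "length x \<le> N"
  shows "card {i. i \<le> n \<and> take (length x) (drop i w) = x}
       = size (filter_mset (\<lambda>y. take (length x) y = x) (mset (map (\<lambda>i. take N (drop i w)) [0..<Suc n])))"
proof -
  let ?W = "map (\<lambda>i. take N (drop i w)) [0..<Suc n]"
  have "take (length x) (?W ! i) = take (length x) (drop i w)" if "i \<le> n" for i
    using that assms by (simp add: min_absorb1 nth_map_upt del: upt_Suc)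
  then have "{i. i \<le> n \<and> take (length x) (drop i w) = x} = {i. i < length ?W \<and> take (length x) (?W ! i) = x}"
    by (auto simp: less_Suc_eq_le simp del: upt_Suc)
  also have "card \<dots> = length (filter (\<lambda>y. take (length x) y = x) ?W)"
    by (rule length_filter_conv_card[symmetric])
  finally show ?thesis unfolding mset_filter[symmetric] size_mset .
qed

lemma card_positions_shift:
  "card {i. n < i \<and> i + k \<le> length w \<and> P (drop i w)}
   = card {j. 0 < j \<and> j + k \<le> length w - n \<and> P (drop j (drop n w))}"
proof -
  have "{i. n < i \<and> i + k \<le> length w \<and> P (drop i w)}
      = (\<lambda>j. j + n) ` {j. 0 < j \<and> j + k \<le> length w - n \<and> P (drop j (drop n w))}"
  proof (intro set_eqI iffI)
    fix i assume "i \<in> {i. n < i \<and> i + k \<le> length w \<and> P (drop i w)}"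
    then show "i \<in> (\<lambda>j. j + n) ` {j. 0 < j \<and> j + k \<le> length w - n \<and> P (drop j (drop n w))}"
      by (intro image_eqI[of _ _ "i - n"]) auto
  qed (auto simp: add.commute)
  then show ?thesis by (simp add: card_image inj_on_def)
qed

lemma occ_eq_walk_occ:
  assumes "length v = N" "length x \<le> N"
  shows "occ (v @ u) x = walk_occ N (mset (dbwalk N v u)) (last (dbwalk N v u)) x"
proof -
  define w where "w = v @ u"
  have w: "length w = N + length u" using assms(1) by (simp add: w_def)
  let ?P = "\<lambda>i. take (length x) (drop i w) = x"
  let ?A = "{i. i \<le> length u \<and> ?P i}"
  let ?B = "{i. length u < i \<and> i + length x \<le> length w \<and> ?P i}"
  have "{i. i + length x \<le> length w \<and> ?P i} = ?A \<union> ?B"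
    using w assms(2) by auto
  moreover have "finite ?A" "finite ?B" "?A \<inter> ?B = {}"
    by (auto intro: finite_subset[of _ "{..length w}"])
  ultimately have "occ w x = card ?A + card ?B"
    by (simp add: occ_eq_card_positions card_Un_disjoint)
  moreover have "card ?A = size (filter_mset (\<lambda>y. take (length x) y = x) (mset (dbwalk N v u)))"
    unfolding dbwalk_eq_windows[OF assms(1)] w_def[symmetric]
    by (rule card_prefix_positions_eq_count_windows[OF assms(2)])
  moreover have "card ?B = card {j. 0 < j \<and> j + length x \<le> N \<and> take (length x) (drop j (last (dbwalk N v u))) = x}"
  proof -
    have "drop (length u) w = last (dbwalk N v u)" using assms(1) by (simp add: w_def last_dbwalk)
    then show ?thesis
      using card_positions_shift[of "length u" "length x" w "\<lambda>y. take (length x) y = x"] w by simp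
  qed
  ultimately show ?thesis unfolding walk_occ_def w_def[symmetric] by simp
qed

lemma WMIX_subset_if_Mtr_subset:
  assumes "\<forall>x\<in>set ws'. length x \<le> N"
    and "WMIX ws \<inter> {w. length w < N} \<subseteq> WMIX ws'"
    and "Mtr N (WMIX ws) \<subseteq> Mtr N (WMIX ws')"
  shows "WMIX ws \<subseteq> WMIX ws'"
proof
  fix w assume w: "w \<in> WMIX ws"
  show "w \<in> WMIX ws'"
  proof (cases "length w < N")
    case True
    then show ?thesis using w assms(2) by blast
  next
    case False
    define v where "v = take N w"
    define u where "u = drop N w"
    have v: "length v = N" and w_eq: "w = v @ u" using False by (simp_all add: v_def u_def)
    have "mtr (dbwalk N v u) \<in> Mtr N (WMIX ws)"
      unfolding Mtr_def using v w w_eq by blast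
    with assms(3) have "mtr (dbwalk N v u) \<in> Mtr N (WMIX ws')" by blast
    then obtain v' u' where v': "length v' = N" and "v' @ u' \<in> WMIX ws'"
      and mtr_eq: "mtr (dbwalk N v' u') = mtr (dbwalk N v u)"
      unfolding Mtr_def by auto
    have "dbwalk N v' u' \<noteq> []" "dbwalk N v u \<noteq> []" by (simp_all add: dbwalk_def)
    note walk_eq = mtr_eq_imp_mset_eq_last_eq[OF this mtr_eq]
    have occ_eq: "occ w x = occ (v' @ u') x" if "x \<in> set ws'" for x
      using that assms(1) walk_eq by (simp add: w_eq occ_eq_walk_occ[OF v] occ_eq_walk_occ[OF v'])
    show ?thesis unfolding WMIX_def
    proof (intro CollectI ballI)
      fix x y assume x: "x \<in> set ws'" and y: "y \<in> set ws'"
      have "occ (v' @ u') x = occ (v' @ u') y"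
        using \<open>v' @ u' \<in> WMIX ws'\<close> x y unfolding WMIX_def by blast
      then show "occ w x = occ w y" using occ_eq[OF x] occ_eq[OF y] by simp
    qed
  qed
qed

theorem theorem2:
  fixes ws ws' :: "('a::finite) list list" and N :: nat
  assumes "N = Max (length ` set (ws @ ws'))"
    and "N \<ge> 1"
  shows "WMIX ws = WMIX ws' \<longleftrightarrow>
           (WMIX ws \<inter> {w. length w < N} = WMIX ws' \<inter> {w. length w < N}
            \<and> Mtr N (WMIX ws) = Mtr N (WMIX ws'))"
proof
  assume "WMIX ws \<inter> {w. length w < N} = WMIX ws' \<inter> {w. length w < N}
            \<and> Mtr N (WMIX ws) = Mtr N (WMIX ws')"
  then have short: "WMIX ws \<inter> {w. length w < N} = WMIX ws' \<inter> {w. length w < N}"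
    and Mtr: "Mtr N (WMIX ws) = Mtr N (WMIX ws')" by simp_all
  have "length x \<le> N" if "x \<in> set ws \<union> set ws'" for x
    unfolding assms(1) using that by (intro Max_ge) simp_all
  then have len: "\<forall>x\<in>set ws. length x \<le> N" "\<forall>x\<in>set ws'. length x \<le> N" by simp_all
  have "WMIX ws \<subseteq> WMIX ws'"
    by (rule WMIX_subset_if_Mtr_subset[OF len(2)]) (use short Mtr in auto)
  moreover have "WMIX ws' \<subseteq> WMIX ws"
    by (rule WMIX_subset_if_Mtr_subset[OF len(1)]) (use short Mtr in auto)
  ultimately show "WMIX ws = WMIX ws'" by (rule antisym)
qed simp

end
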